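(* Let $\lambda\in\mathbb R$ with $\alpha=1-\lambda>0$, and let $\mathcal Q_\lambda$ be a $\lambda$-exponential family whose $\lambda$-log-partition function $\varphi_\lambda$ is proper. Let $N>1$, let $\bar T_1,\dots,\bar T_N\in\mathcal H$ be such that $c_\lambda(\vartheta,\bar T_i)\in\mathbb R$ for all $i$ and all $\vartheta\in\operatorname{dom}\varphi_\lambda$, and let $\rho_1,\dots,\rho_N\ge0$ with $\sum_i\rho_i=1$. Suppose there exists $\vartheta_*\in\operatorname{dom}\varphi_\lambda$ with $\sum_{i=1}^N\rho_i\bar T_i\in\partial^{c_\lambda}\varphi_\lambda(\vartheta_* )$. (i) If $\lambda=0$, $\vartheta_*$ minimizes $\vartheta\mapsto\varphi_\lambda(\vartheta)-\sum_i\rho_ic_\lambda(\vartheta,\bar T_i)$ over $\operatorname{dom}\varphi_\lambda$. (ii) If $\lambda<0$, $\vartheta_*$ minimizes $\vartheta\mapsto\varphi_\lambda(\vartheta)-c_\lambda(\vartheta,\sum_i\rho_i\bar T_i)$ over $\operatorname{dom}\varphi_\lambda$, and this function is an upper bound of $\vartheta\mapsto\varphi_\lambda(\vartheta)-\sum_i\rho_ic_\lambda(\vartheta,\bar T_i)$ on $\operatorname{dom}\varphi_\lambda$. Moreover $\varphi_\lambda(\vartheta_* )-\sum_i\rho_ic_\lambda(\vartheta_*,\bar T_i)\le-\varphi_\lambda^{c_\lambda}(\sum_i\rho_i\bar T_i)$. (iii) If $\lambda>0$, $\vartheta_*$ minimizes $\vartheta\mapsto\varphi_\lambda(\vartheta)-c_\lambda(\vartheta,\sum_i\rho_i\bar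 T_i)$ over $\operatorname{dom}\varphi_\lambda$, and this function is a lower bound of $\vartheta\mapsto\varphi_\lambda(\vartheta)-\sum_i\rho_ic_\lambda(\vartheta,\bar T_i)$ on $\operatorname{dom}\varphi_\lambda$. Moreover $-\varphi_\lambda^{c_\lambda}(\sum_i\rho_i\bar T_i)\le\varphi_\lambda(\vartheta)-\sum_i\rho_ic_\lambda(\vartheta,\bar T_i)$ for all $\vartheta\in\operatorname{dom}\varphi_\lambda$.
   Context: $\mathcal H$ is a finite-dimensional real Hilbert space; $\mathcal X$ a measurable space with measure $m$; $T:\mathcal X\to\mathcal H$ measurable. Conventions $\log s=-\infty$ for $s\le0$, $\exp(-\infty)=0$. Coupling: $c_\lambda(u,v)=\frac1\lambda\log(1+\lambda\langle u,v\rangle)$ for $\lambda\ne0$, $c_0(u,v)=\langle u,v\rangle$. $\varphi_\lambda(\vartheta)=\log\int\exp(c_\lambda(\vartheta,T(x)))m(dx)$, $\operatorname{dom}\varphi_\lambda=\{\vartheta:\varphi_\lambda(\vartheta)<+\infty\}$, $q_\vartheta=\exp(c_\lambda(\vartheta,T)-\varphi_\lambda(\vartheta))$, $\mathcal Q_\lambda=\{q_\vartheta:\vartheta\in\operatorname{dom}\varphi_\lambda\}$; proper means $\varphi_\lambda>-\infty$ everywhere and $\operatorname{dom}\varphi_\lambda\ne\emptyset$. For proper $f:\mathcal H\to\bar{\mathbb R}$: $f^{c_\lambda}(v)=\sup_{u\in\mathcal H}c_\lambda(u,v)-f(u)$, and $v\in\partial^{c_\lambda}f(u)$ iff $f^{c_\lambda}(v)+f(u)=c_\lambda(u,v)$.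 *)

theory Defs
  imports "HOL-Analysis.Analysis" "HOL-Probability.Probability"
begin

definition elog :: "ennreal \<Rightarrow> ereal" where
  "elog s = (if s = 0 then - \<infinity> else if s = \<top> then \<infinity> else ereal (ln (enn2real s)))"

definition eexp :: "ereal \<Rightarrow> ennreal" where
  "eexp t = (if t = - \<infinity> then 0 else if t = \<infinity> then \<top> else ennreal (exp (real_of_ereal t)))"

text \<open>The coupling c_lambda(u,v) = (1/lambda) log(1 + lambda <u,v>), c_0(u,v) = <u,v>,
  with the convention log s = -infinity for s <= 0.\<close>
definition coupling :: "real \<Rightarrow> 'h::real_inner \<Rightarrow> 'h \<Rightarrow> ereal" where
  "coupling lam u v =
     (if lam = 0 then ereal (inner u v)
      else if 1 + lam * inner u v \<le> 0 then ereal (1 / lam) * (- \<infinity>)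
      else ereal (ln (1 + lam * inner u v) / lam))"

definition logpart :: "real \<Rightarrow> 'x measure \<Rightarrow> ('x \<Rightarrow> 'h::real_inner) \<Rightarrow> 'h \<Rightarrow> ereal" where
  "logpart lam M T \<theta> = elog (\<integral>\<^sup>+ x. eexp (coupling lam \<theta> (T x)) \<partial>M)"

definition edom :: "('h \<Rightarrow> ereal) \<Rightarrow> 'h set" where
  "edom f = {u. f u < \<infinity>}"

definition proper_fun :: "('h \<Rightarrow> ereal) \<Rightarrow> bool" where
  "proper_fun f \<longleftrightarrow> (\<forall>u. f u > - \<infinity>) \<and> edom f \<noteq> {}"

text \<open>c_lambda-conjugate: sup over u of c(u,v) - f(u); points with f(u) = +infinity
  contribute -infinity (they are excluded), so the sup is taken over dom f.\<close>
definition cconj :: "real \<Rightarrow> ('h::real_inner \<Rightarrow> ereal) \<Rightarrow> 'h \<Rightarrow> ereal" where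
  "cconj lam f v = (SUP u \<in> edom f. coupling lam u v - f u)"

definition csubdiff :: "real \<Rightarrow> ('h::real_inner \<Rightarrow> ereal) \<Rightarrow> 'h \<Rightarrow> 'h set" where
  "csubdiff lam f u = {v. cconj lam f v + f u = coupling lam u v}"

end

theory Submission
  imports Defs
begin

text \<open>If v is a c-subgradient of a proper f at u, the equality f^c(v) + f(u) = c(u, v)
  together with f^c(v) \<ge> c(w, v) - f(w) makes u a minimizer of f - c(., v) on dom f, with
  minimal value - f^c(v). Jensen's inequality for the concave logarithm compares the averaged
  couplings sum rho_i c(theta, Tb_i) with c(theta, sum rho_i Tb_i): they lie below it for
  lambda > 0 and above it for lambda < 0, and coincide with it for lambda = 0 by bilinearity.\<close>

lemma coupling_eq_ln:
  assumes "lam \<noteq> 0" "1 + lam * inner u v > 0"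
  shows "coupling lam u v = ereal (ln (1 + lam * inner u v) / lam)"
  using assms by (simp add: coupling_def)

lemma coupling_finite_imp_pos:
  assumes "lam \<noteq> 0" "\<bar>coupling lam u v\<bar> \<noteq> \<infinity>"
  shows "1 + lam * inner u v > 0"
proof (rule ccontr)
  assume "\<not> ?thesis"
  then have "coupling lam u v = ereal (1 / lam) * - \<infinity>"
    using assms(1) by (simp add: coupling_def)
  then show False
    using assms by (cases "lam > 0") auto
qed

lemma sum_coupling_zero:
  "(\<Sum>i\<in>I. ereal (rho i) * coupling 0 u (Tb i)) = coupling 0 u (\<Sum>i\<in>I. rho i *\<^sub>R Tb i)"
  by (simp add: coupling_def inner_sum_right)

lemma ln_affine_jensen:
  fixes Tb :: "'i \<Rightarrow> 'h::real_inner"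
  assumes "finite I" and nn: "\<And>i. i \<in> I \<Longrightarrow> rho i \<ge> 0" and sum1: "sum rho I = 1"
    and pos: "\<And>i. i \<in> I \<Longrightarrow> 1 + lam * inner u (Tb i) > 0"
  shows "1 + lam * inner u (\<Sum>i\<in>I. rho i *\<^sub>R Tb i) > 0"
    and "(\<Sum>i\<in>I. rho i * ln (1 + lam * inner u (Tb i)))
           \<le> ln (1 + lam * inner u (\<Sum>i\<in>I. rho i *\<^sub>R Tb i))"
proof -
  have "I \<noteq> {}" using sum1 by auto
  have mean: "(\<Sum>i\<in>I. rho i *\<^sub>R (1 + lam * inner u (Tb i)))
                = 1 + lam * inner u (\<Sum>i\<in>I. rho i *\<^sub>R Tb i)"
    by (simp add: inner_sum_right algebra_simps sum.distrib sum_distrib_left sum1)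
  have "(\<Sum>i\<in>I. rho i *\<^sub>R (1 + lam * inner u (Tb i))) \<in> {0<..}"
    using \<open>finite I\<close> sum1 nn pos by (intro convex_sum) auto
  then show "1 + lam * inner u (\<Sum>i\<in>I. rho i *\<^sub>R Tb i) > 0"
    by (simp only: mean greaterThan_iff)
  have "(\<Sum>i\<in>I. rho i * ln (1 + lam * inner u (Tb i)))
          \<le> ln (\<Sum>i\<in>I. rho i *\<^sub>R (1 + lam * inner u (Tb i)))"
    using \<open>finite I\<close> \<open>I \<noteq> {}\<close> sum1 nn pos by (intro concave_on_sum[OF _ _ ln_concave]) auto
  then show "(\<Sum>i\<in>I. rho i * ln (1 + lam * inner u (Tb i)))
               \<le> ln (1 + lam * inner u (\<Sum>i\<in>I. rho i *\<^sub>R Tb i))"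
    by (simp only: mean)
qed

lemma sum_coupling_eq_ln:
  assumes "lam \<noteq> 0" and fin: "\<And>i. i \<in> I \<Longrightarrow> \<bar>coupling lam u (Tb i)\<bar> \<noteq> \<infinity>"
  shows "(\<Sum>i\<in>I. ereal (rho i) * coupling lam u (Tb i))
           = ereal ((\<Sum>i\<in>I. rho i * ln (1 + lam * inner u (Tb i))) / lam)"
proof -
  have "(\<Sum>i\<in>I. ereal (rho i) * coupling lam u (Tb i))
          = (\<Sum>i\<in>I. ereal (rho i * ln (1 + lam * inner u (Tb i)) / lam))"
    using coupling_eq_ln[OF \<open>lam \<noteq> 0\<close> coupling_finite_imp_pos[OF \<open>lam \<noteq> 0\<close> fin]]
    by (intro sum.cong) auto
  then show ?thesis by (simp add: sum_divide_distrib)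
qed

lemma sum_coupling_le_coupling_sum:
  fixes Tb :: "'i \<Rightarrow> 'h::real_inner"
  assumes "lam > 0" and "finite I" and "\<And>i. i \<in> I \<Longrightarrow> rho i \<ge> 0" and "sum rho I = 1"
    and fin: "\<And>i. i \<in> I \<Longrightarrow> \<bar>coupling lam u (Tb i)\<bar> \<noteq> \<infinity>"
  shows "(\<Sum>i\<in>I. ereal (rho i) * coupling lam u (Tb i)) \<le> coupling lam u (\<Sum>i\<in>I. rho i *\<^sub>R Tb i)"
proof -
  have lam: "lam \<noteq> 0" using \<open>lam > 0\<close> by simp
  note jensen = ln_affine_jensen[OF assms(2-4) coupling_finite_imp_pos[OF lam fin]]
  show ?thesis
    using divide_right_mono[OF jensen(2), where c = lam] \<open>lam > 0\<close>
    by (simp add: sum_coupling_eq_ln[OF lam fin] coupling_eq_ln[OF lam jensen(1)])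
qed

lemma coupling_sum_le_sum_coupling:
  fixes Tb :: "'i \<Rightarrow> 'h::real_inner"
  assumes "lam < 0" and "finite I" and "\<And>i. i \<in> I \<Longrightarrow> rho i \<ge> 0" and "sum rho I = 1"
    and fin: "\<And>i. i \<in> I \<Longrightarrow> \<bar>coupling lam u (Tb i)\<bar> \<noteq> \<infinity>"
  shows "coupling lam u (\<Sum>i\<in>I. rho i *\<^sub>R Tb i) \<le> (\<Sum>i\<in>I. ereal (rho i) * coupling lam u (Tb i))"
proof -
  have lam: "lam \<noteq> 0" using \<open>lam < 0\<close> by simp
  note jensen = ln_affine_jensen[OF assms(2-4) coupling_finite_imp_pos[OF lam fin]]
  show ?thesis
    using divide_right_mono_neg[OF jensen(2), where c = lam] \<open>lam < 0\<close>
    by (simp add: sum_coupling_eq_ln[OF lam fin] coupling_eq_ln[OF lam jensen(1)])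
qed

lemma proper_fun_finite:
  assumes "proper_fun f" "u \<in> edom f"
  shows "\<bar>f u\<bar> \<noteq> \<infinity>"
  using assms unfolding proper_fun_def edom_def by force

lemma cconj_upper:
  "u \<in> edom f \<Longrightarrow> coupling lam u v - f u \<le> cconj lam f v"
  unfolding cconj_def by (rule SUP_upper)

lemma csubdiff_cconj_eq:
  assumes "proper_fun f" "u \<in> edom f" "v \<in> csubdiff lam f u"
  shows "cconj lam f v = coupling lam u v - f u"
proof -
  obtain s where s: "f u = ereal s" using proper_fun_finite[OF assms(1,2)] by (cases "f u") auto
  then have "cconj lam f v + ereal s = coupling lam u v"
    using assms(3) by (simp add: csubdiff_def)
  then show ?thesis
    unfolding s by (cases "cconj lam f v"; cases "coupling lam u v") auto
qed

lemma csubdiff_neg_cconj_eq: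
  assumes "proper_fun f" "u \<in> edom f" "v \<in> csubdiff lam f u"
  shows "- cconj lam f v = f u - coupling lam u v"
  using proper_fun_finite[OF assms(1,2)] unfolding csubdiff_cconj_eq[OF assms]
  by (cases "f u"; cases "coupling lam u v") auto

lemma csubdiff_imp_minimizer:
  assumes "proper_fun f" "u \<in> edom f" "v \<in> csubdiff lam f u" "w \<in> edom f"
  shows "f u - coupling lam u v \<le> f w - coupling lam w v"
proof -
  have "coupling lam w v - f w \<le> coupling lam u v - f u"
    using cconj_upper[OF assms(4), where lam = lam and v = v]
    unfolding csubdiff_cconj_eq[OF assms(1-3)] .
  then show ?thesis
    using proper_fun_finite[OF assms(1,2)] proper_fun_finite[OF assms(1,4)]
    by (cases "f u"; cases "f w"; cases "coupling lam u v"; cases "coupling lam w v") auto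
qed

theorem proposition6:
  fixes lam :: real and M :: "'x measure" and T :: "'x \<Rightarrow> 'h::euclidean_space"
    and N :: nat and Tb :: "nat \<Rightarrow> 'h" and rho :: "nat \<Rightarrow> real" and \<theta>s :: 'h
  assumes alpha: "1 - lam > 0"
    and T_meas: "T \<in> borel_measurable M"
    and proper: "proper_fun (logpart lam M T)"
    and N: "N > 1"
    and fin: "\<And>i \<theta>. i \<in> {1..N} \<Longrightarrow> \<theta> \<in> edom (logpart lam M T) \<Longrightarrow>
               \<bar>coupling lam \<theta> (Tb i)\<bar> \<noteq> \<infinity>"
    and rho_nn: "\<And>i. i \<in> {1..N} \<Longrightarrow> rho i \<ge> 0"
    and rho_sum: "(\<Sum>i=1..N. rho i) = 1"
    and \<theta>s_dom: "\<theta>s \<in> edom (logpart lam M T)"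
    and sub: "(\<Sum>i=1..N. rho i *\<^sub>R Tb i) \<in> csubdiff lam (logpart lam M T) \<theta>s"
  shows
    "(lam = 0 \<longrightarrow>
        (\<forall>\<theta> \<in> edom (logpart lam M T).
           logpart lam M T \<theta>s - (\<Sum>i=1..N. ereal (rho i) * coupling lam \<theta>s (Tb i))
           \<le> logpart lam M T \<theta> - (\<Sum>i=1..N. ereal (rho i) * coupling lam \<theta> (Tb i))))
     \<and> (lam < 0 \<longrightarrow>
        (\<forall>\<theta> \<in> edom (logpart lam M T).
           logpart lam M T \<theta>s - coupling lam \<theta>s (\<Sum>i=1..N. rho i *\<^sub>R Tb i)
           \<le> logpart lam M T \<theta> - coupling lam \<theta> (\<Sum>i=1..N. rho i *\<^sub>R Tb i))
        \<and> (\<forall>\<theta> \<in> edom (logpart lam M T).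
           logpart lam M T \<theta> - (\<Sum>i=1..N. ereal (rho i) * coupling lam \<theta> (Tb i))
           \<le> logpart lam M T \<theta> - coupling lam \<theta> (\<Sum>i=1..N. rho i *\<^sub>R Tb i))
        \<and> logpart lam M T \<theta>s - (\<Sum>i=1..N. ereal (rho i) * coupling lam \<theta>s (Tb i))
           \<le> - cconj lam (logpart lam M T) (\<Sum>i=1..N. rho i *\<^sub>R Tb i))
     \<and> (lam > 0 \<longrightarrow>
        (\<forall>\<theta> \<in> edom (logpart lam M T).
           logpart lam M T \<theta>s - coupling lam \<theta>s (\<Sum>i=1..N. rho i *\<^sub>R Tb i)
           \<le> logpart lam M T \<theta> - coupling lam \<theta> (\<Sum>i=1..N. rho i *\<^sub>R Tb i))
        \<and> (\<forall>\<theta> \<in> edom (logpart lam M T).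
           logpart lam M T \<theta> - coupling lam \<theta> (\<Sum>i=1..N. rho i *\<^sub>R Tb i)
           \<le> logpart lam M T \<theta> - (\<Sum>i=1..N. ereal (rho i) * coupling lam \<theta> (Tb i)))
        \<and> (\<forall>\<theta> \<in> edom (logpart lam M T).
           - cconj lam (logpart lam M T) (\<Sum>i=1..N. rho i *\<^sub>R Tb i)
           \<le> logpart lam M T \<theta> - (\<Sum>i=1..N. ereal (rho i) * coupling lam \<theta> (Tb i))))"
proof -
  let ?f = "logpart lam M T" and ?v = "\<Sum>i=1..N. rho i *\<^sub>R Tb i"
  let ?avg = "\<lambda>\<theta>. \<Sum>i=1..N. ereal (rho i) * coupling lam \<theta> (Tb i)"
  note minimizer = csubdiff_imp_minimizer[OF proper \<theta>s_dom sub]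
  note min_value = csubdiff_neg_cconj_eq[OF proper \<theta>s_dom sub]
  have below: "?avg \<theta> \<le> coupling lam \<theta> ?v" if "lam > 0" "\<theta> \<in> edom ?f" for \<theta>
    using that rho_nn rho_sum fin by (intro sum_coupling_le_coupling_sum) auto
  have above: "coupling lam \<theta> ?v \<le> ?avg \<theta>" if "lam < 0" "\<theta> \<in> edom ?f" for \<theta>
    using that rho_nn rho_sum fin by (intro coupling_sum_le_sum_coupling) auto
  have conj_bound: "- cconj lam ?f ?v \<le> ?f \<theta> - ?avg \<theta>" if "lam > 0" "\<theta> \<in> edom ?f" for \<theta>
    unfolding min_value
    using order_trans[OF minimizer[OF that(2)] ereal_minus_mono[OF order_refl below[OF that]]] .
  have bilinear: "?avg \<theta> = coupling lam \<theta> ?v" if "lam = 0" for \<theta>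
    using sum_coupling_zero that by simp
  show ?thesis
    using minimizer min_value conj_bound bilinear
      ereal_minus_mono[OF order_refl below] ereal_minus_mono[OF order_refl above] \<theta>s_dom
    by auto
qed

end
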